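(* Under the model in the context, for every $q>1$ and every $\varepsilon>0$, $$\lim_{N\to\infty}\Pr\Big(\text{for all profiles }\mathbf a\text{ and all }n\in\mathcal N:\ |B_\varepsilon(\mathbf a_{-n})|\ge\tfrac{1}{2l_N}\big(1-\tfrac1q\big)N\Big)=1.$$ Furthermore, $$\max_{n\in\mathcal N,\ \mathbf a}\Big|\max_{k\in\{1,\dots,K\}}u_n(k,\mathbf a_{-n})-\log_2\Big(1+\frac{g_{n,d(n)}P_n}{N_0}\Big)\Big|\to0$$ in probability as $N\to\infty$ (the maximum being over all players and all channel profiles).
   Context: Model. Fix constants $\lambda>0$, $\alpha>0$, $G>0$, $\theta_T,\theta_R\in(0,2\pi]$, $P_0>0$, $N_0>0$ and a positive integer $S$. For each $N\ge2$ there are $N$ players $\mathcal N=\{1,\dots,N\}$ and a destination map $d:\mathcal N\to\mathcal N$, fixed independently of the player locations, with $d(n)\ne n$ for all $n$ and with every player being the destination of at most $S$ players. The number of channels is $K=N/l_N$ (an integer), where $l_N\ge1$ and $l_N\left(\frac{\log N}{N}\right)^{\frac{\alpha}{\alpha+2}}\to0$ as $N\to\infty$. The locations $x_1,\dots,x_N$ of the players are i.i.d. uniform on a fixed closed set $\mathcal D\subseteq\mathbb R^2$ of area $1/\lambda$. Each player has a transmit beam of angular width $\theta_T$ and a receive beam of angular width $\theta_R$, with fixed arbitrary orientations. For $i\ne j$, $r_{i,j}=\|x_i-x_j\|$; $\theta_{i,j}$ denotes the angle between the direction from $x_i$ to $x_j$ and the bisector of player $i$'s transmit beam when $i$ acts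 as transmitter, resp. of player $i$'s receive beam when $i$ acts as receiver. The channel gain from transmitter $m$ to receiver $d(n)$ is $g_{m,d(n)}=G\,r_{m,d(n)}^{-\alpha}\,\mathbf 1\{|\theta_{m,d(n)}|\le\theta_T/2\}\,\mathbf 1\{|\theta_{d(n),m}|\le\theta_R/2\}$ for $m\ne d(n)$ (angle of $m$ w.r.t. its transmit beam, angle of $d(n)$ w.r.t. its receive beam), and $g_{d(n),d(n)}=+\infty$. Player $n$ transmits with power $P_n\in(0,P_{\max}]$, $P_{\max}=P_0\left(\frac{\log N}{N}\right)^{\alpha/2}$ (the $P_n$ may depend on the locations). Game: each player chooses one channel $a_n\in\{1,\dots,K\}$; $\mathbf a=(a_1,\dots,a_N)$, $\mathbf a_{-n}$ is the profile of the others and $(k,\mathbf a_{-n})$ the profile where $n$ plays $k$. Interference: $I_n(\mathbf a)=\sum_{m\ne n:\,a_m=a_n}g_{m,d(n)}P_m$. Utility: $u_n(\mathbf a)=R_n(\mathbf a)=\log_2\!\big(1+\frac{g_{n,d(n)}P_n}{N_0+I_n(\mathbf a)}\big)$ (equal to $0$ if $I_n(\mathbf a)=\infty$). For $\varepsilon>0$, $B_\varepsilon(\mathbf a_{-n})=\{k:\ u_n(k,\mathbf a_{-n})+\varepsilon\ge\max_{k'}u_n(k',\mathbf a_{-n})\}$. A profile $\mathbf a$ is an $\varepsilon$-PNE if $a_n\in B_\varepsilon(\mathbf a_{-n})$ for all $n$. All probabilities "over the random game" are with respect to the random locations, and limits are as $N\to\infty$ with all constants fixed. *)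

theory Defs
  imports "HOL-Analysis.Analysis"
begin

text \<open>Players are 1..N, channels 1..K.
  The angle between the direction from p to q and a beam bisector of orientation phi is
  Arg ((q - p) / cis phi), a value in (-pi, pi].\<close>

definition gain :: "real \<Rightarrow> real \<Rightarrow> real \<Rightarrow> real \<Rightarrow> (nat \<Rightarrow> complex)
    \<Rightarrow> (nat \<Rightarrow> real) \<Rightarrow> (nat \<Rightarrow> real) \<Rightarrow> nat \<Rightarrow> nat \<Rightarrow> real" where
  "gain G alpha thT thR x oT oR m j =
     G * (cmod (x m - x j)) powr (- alpha)
       * (if \<bar>Arg ((x j - x m) / cis (oT m))\<bar> \<le> thT / 2 then 1 else 0)
       * (if \<bar>Arg ((x m - x j) / cis (oR j))\<bar> \<le> thR / 2 then 1 else 0)"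

text \<open>Rate of player n under profile a; g m j is the gain from transmitter m to receiver j
  (for m \<noteq> j), and g_{d(n),d(n)} = infinity is encoded by the explicit first case.\<close>

definition rate :: "(nat \<Rightarrow> nat \<Rightarrow> real) \<Rightarrow> (nat \<Rightarrow> real) \<Rightarrow> real \<Rightarrow> (nat \<Rightarrow> nat)
    \<Rightarrow> nat \<Rightarrow> nat \<Rightarrow> (nat \<Rightarrow> nat) \<Rightarrow> real" where
  "rate g P N0 d N n a =
     (if (\<exists>m\<in>{1..N}. m \<noteq> n \<and> a m = a n \<and> m = d n) then 0
      else log 2 (1 + g n (d n) * P n /
              (N0 + (\<Sum>m\<in>{m\<in>{1..N}. m \<noteq> n \<and> a m = a n}. g m (d n) * P m))))"

definition best_resp :: "((nat \<Rightarrow> nat) \<Rightarrow> real) \<Rightarrow> nat \<Rightarrow> real \<Rightarrow> nat \<Rightarrow> (nat \<Rightarrow> nat) \<Rightarrow> nat set" where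
  "best_resp u K eps n a =
     {k\<in>{1..K}. (MAX k'\<in>{1..K}. u (a(n := k'))) \<le> u (a(n := k)) + eps}"

definition profiles :: "nat \<Rightarrow> nat \<Rightarrow> (nat \<Rightarrow> nat) set" where
  "profiles N K = {1..N} \<rightarrow>\<^sub>E {1..K}"

definition loc_space :: "complex set \<Rightarrow> nat \<Rightarrow> (nat \<Rightarrow> complex) measure" where
  "loc_space D N = PiM {1..N} (\<lambda>_. uniform_measure lborel D)"

end

theory Submission
  imports Defs "HOL-Probability.Probability" "HOL-Real_Asymp.Real_Asymp"
begin

text \<open>Let \<open>c = G P_max\<close>, so that a transmitter at distance \<open>r\<close> from a receiver contributes at
  most \<open>c r^-alpha\<close> to its interference. The locations have low interference (at level \<open>t\<close>) if
  around every receiver these contributions, truncated at \<open>t\<close>, sum to at most \<open>t (K/2 - 1)\<close>.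
  Interference only lowers a rate, so no channel beats the interference-free rate
  \<open>log2 (1 + g P / N0)\<close>. With low interference a Markov-type count shows that at most \<open>K/2 - 1\<close>
  channels other than the receiver's own carry truncated load \<open>\<ge> t\<close>; on each of the remaining
  \<open>\<ge> K/2\<close> channels the interference is below \<open>t\<close>, so the rate is within \<open>log2 (1 + t/N0)\<close> of the
  interference-free one. Choosing \<open>log2 (1 + t/N0) = eps\<close> gives both claims on the
  low-interference event.

  That event has probability tending to 1: given the receiver, the truncated contributions of
  the others are i.i.d. with mean \<open>O(t R^2 lambda + c R^-alpha)\<close>, which is \<open>O(c^(2/(alpha+2)))\<close> for
  \<open>R = c^(1/(alpha+2))\<close>. An exponential Markov bound and a union bound over the receivers leave
  \<open>N exp (1 - K/2 + O(N c^(2/(alpha+2))))\<close>, which tends to 0 because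
  \<open>l_N (log N / N)^(alpha/(alpha+2)) \<longrightarrow> 0\<close>.\<close>

lemma borel_measurable_Arg [measurable]: "Arg \<in> borel_measurable borel"
proof -
  have eq: "Arg = (\<lambda>z. indicator (- \<real>\<^sub>\<le>\<^sub>0) z *\<^sub>R Arg z + indicator (\<real>\<^sub>\<le>\<^sub>0 - {0}) z * pi)"
    by (auto simp: fun_eq_iff indicator_def Arg_eq_pi_iff Arg_zero nonpos_Reals_def complex_is_Real_iff)
  have "(\<lambda>z. indicator (- \<real>\<^sub>\<le>\<^sub>0) z *\<^sub>R Arg z) \<in> borel_measurable (borel :: complex measure)"
    by (intro borel_measurable_continuous_on_indicator continuous_on_Arg borel_open)
      (simp add: open_Compl)
  moreover have "(\<real>\<^sub>\<le>\<^sub>0 - {0} :: complex set) \<in> sets borel"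
    by (intro sets.Diff borel_closed) auto
  ultimately show ?thesis
    by (subst eq) (intro borel_measurable_add borel_measurable_times borel_measurable_indicator
        borel_measurable_const)
qed

lemma sets_loc_space: "sets (loc_space D N) = sets (PiM {1..N} (\<lambda>_. borel :: complex measure))"
  unfolding loc_space_def by (intro sets_PiM_cong) auto

lemma borel_measurable_loc_space:
  "f \<in> borel_measurable (PiM {1..N} (\<lambda>_. borel)) \<Longrightarrow> f \<in> borel_measurable (loc_space D N)"
  by (subst measurable_cong_sets[OF sets_loc_space refl])

lemma borel_measurable_gain:
  assumes "m \<in> {1..N}" "j \<in> {1..N}"
  shows "(\<lambda>x. gain G alpha thT thR x oT oR m j) \<in> borel_measurable (PiM {1..N} (\<lambda>_. borel))"
  unfolding gain_def using assms by measurable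

lemma borel_measurable_rate:
  assumes "\<And>m. m \<in> {1..N} \<Longrightarrow> (\<lambda>x. g x m (d n)) \<in> borel_measurable M"
    and "\<And>m. m \<in> {1..N} \<Longrightarrow> (\<lambda>x. Pw x m) \<in> borel_measurable M"
    and "n \<in> {1..N}"
  shows "(\<lambda>x. rate (g x) (Pw x) N0 d N n a) \<in> borel_measurable M"
proof (cases "\<exists>m\<in>{1..N}. m \<noteq> n \<and> a m = a n \<and> m = d n")
  case False
  then show ?thesis
    unfolding rate_def if_not_P[OF False] using assms
    by (intro borel_measurable_log borel_measurable_add borel_measurable_divide
        borel_measurable_times borel_measurable_sum borel_measurable_const) auto
qed (simp add: rate_def)

lemma sets_card_best_resp_ge:
  fixes U :: "'x \<Rightarrow> nat \<Rightarrow> (nat \<Rightarrow> nat) \<Rightarrow> real"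
  assumes "finite Prof"
    and "\<And>a n k. a \<in> Prof \<Longrightarrow> n \<in> {1..N} \<Longrightarrow> (\<lambda>x. U x n (a(n := k))) \<in> borel_measurable M"
  shows "{x \<in> space M. \<forall>a\<in>Prof. \<forall>n\<in>{1..N}. real (card (best_resp (U x n) K eps n a)) \<ge> c} \<in> sets M"
proof -
  have card_eq: "real (card (best_resp (U x n) K eps n a)) =
      (\<Sum>k\<in>{1..K}. if (MAX k'\<in>{1..K}. U x n (a(n := k'))) \<le> U x n (a(n := k)) + eps then 1 else 0)"
    for x n a unfolding best_resp_def by (subst sum.inter_filter[symmetric]) simp_all
  have "(\<lambda>x. \<Sum>k\<in>{1..K}. if (MAX k'\<in>{1..K}. U x n (a(n := k'))) \<le> U x n (a(n := k)) + eps
      then 1 else (0::real)) \<in> borel_measurable M" if "a \<in> Prof" "n \<in> {1..N}" for a n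
  proof (intro borel_measurable_sum measurable_If borel_measurable_const)
    fix k
    have "(\<lambda>x. MAX k'\<in>{1..K}. U x n (a(n := k'))) \<in> borel_measurable M"
      using assms(2)[OF that] by (intro borel_measurable_Max) auto
    then show "{x \<in> space M. (MAX k'\<in>{1..K}. U x n (a(n := k'))) \<le> U x n (a(n := k)) + eps} \<in> sets M"
      using assms(2)[OF that] by measurable
  qed
  then show ?thesis
    unfolding card_eq using assms(1) by (intro predE pred_intros_finite pred_const_le) auto
qed

lemma log_one_plus_le_interference:
  fixes A I t N0 :: real
  assumes "N0 > 0" "A \<ge> 0" "0 \<le> I" "I \<le> t"
  shows "log 2 (1 + A / N0) \<le> log 2 (1 + A / (N0 + I)) + log 2 (1 + t / N0)"
proof -
  have "1 + A / N0 \<le> 1 + (A + I) / N0" using assms by (simp add: divide_right_mono)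
  also have "\<dots> = (1 + A / (N0 + I)) * (1 + I / N0)"
    using assms by (simp add: divide_simps add_nonneg_pos[THEN less_imp_neq[symmetric]])
  also have "\<dots> \<le> (1 + A / (N0 + I)) * (1 + t / N0)"
    using assms by (intro mult_left_mono) (auto simp: divide_right_mono add_nonneg_nonneg)
  finally have "1 + A / N0 \<le> (1 + A / (N0 + I)) * (1 + t / N0)" .
  moreover have pos: "0 < 1 + A / (N0 + I)" "0 < 1 + t / N0" "0 < 1 + A / N0"
    using assms by (auto intro: add_pos_nonneg)
  ultimately have "log 2 (1 + A / N0) \<le> log 2 ((1 + A / (N0 + I)) * (1 + t / N0))"
    by simp
  then show ?thesis
    using pos by (subst (asm) log_mult) auto
qed

lemma rate_le_interference_free:
  assumes "N0 > 0" "0 \<le> g n (d n) * Pw n" "\<forall>m\<in>{1..N}-{d n}. 0 \<le> g m (d n) * Pw m"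
  shows "rate g Pw N0 d N n a \<le> log 2 (1 + g n (d n) * Pw n / N0)"
proof (cases "\<exists>m\<in>{1..N}. m \<noteq> n \<and> a m = a n \<and> m = d n")
  case False
  define I where "I = (\<Sum>m\<in>{m\<in>{1..N}. m \<noteq> n \<and> a m = a n}. g m (d n) * Pw m)"
  have "0 \<le> I" unfolding I_def using False assms(3) by (intro sum_nonneg) auto
  then have "g n (d n) * Pw n / (N0 + I) \<le> g n (d n) * Pw n / N0"
    using assms by (intro divide_left_mono) auto
  then show ?thesis
    unfolding rate_def if_not_P[OF False] I_def[symmetric] using assms \<open>0 \<le> I\<close>
    by (subst log_le_cancel_iff) (auto intro: add_pos_nonneg)
next
  case True
  have "0 \<le> g n (d n) * Pw n / N0" using assms by simp
  with True show ?thesis by (simp add: rate_def)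
qed

lemma card_heavy_classes_le:
  fixes w :: "'a \<Rightarrow> real"
  assumes "finite X" "finite B" "\<And>m. m \<in> X \<Longrightarrow> 0 \<le> w m"
  shows "t * card {k\<in>B. t \<le> (\<Sum>m\<in>{m\<in>X. a m = k}. w m)} \<le> (\<Sum>m\<in>X. w m)"
proof -
  let ?H = "\<lambda>k. \<Sum>m\<in>{m\<in>X. a m = k}. w m"
  have "t * card {k\<in>B. t \<le> ?H k} = (\<Sum>k\<in>{k\<in>B. t \<le> ?H k}. t)" by simp
  also have "\<dots> \<le> (\<Sum>k\<in>{k\<in>B. t \<le> ?H k}. ?H k)" by (intro sum_mono) auto
  also have "\<dots> \<le> (\<Sum>k\<in>B. ?H k)"
    using assms by (intro sum_mono2 sum_nonneg) auto
  also have "\<dots> = (\<Sum>m\<in>{m\<in>X. a m \<in> B}. w m)"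
    using assms by (subst sum.group[symmetric, of _ B a]) (auto intro!: sum.cong)
  also have "\<dots> \<le> (\<Sum>m\<in>X. w m)" using assms by (intro sum_mono2) auto
  finally show ?thesis .
qed

lemma rate_near_interference_free_on_light_channel:
  assumes N0: "N0 > 0" and t: "t > 0" and n: "n \<in> {1..N}" "d n \<noteq> n" and k: "k \<noteq> a (d n)"
    and gv: "\<forall>m\<in>{1..N}-{d n}. 0 \<le> g m (d n) * Pw m \<and> g m (d n) * Pw m \<le> v m"
    and light: "(\<Sum>m\<in>{m\<in>{1..N}-{d n}. a m = k}. min t (v m)) < t"
  shows "log 2 (1 + g n (d n) * Pw n / N0) \<le> rate g Pw N0 d N n (a(n := k)) + log 2 (1 + t / N0)"
proof -
  let ?J = "{m\<in>{1..N}-{d n}. a m = k}"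
  let ?T = "{m\<in>{1..N}. m \<noteq> n \<and> (a(n := k)) m = (a(n := k)) n}"
  have no_receiver: "\<not> (\<exists>m\<in>{1..N}. m \<noteq> n \<and> (a(n := k)) m = (a(n := k)) n \<and> m = d n)"
    using n k by auto
  have T_sub: "?T \<subseteq> ?J" using k by auto
  define I where "I = (\<Sum>m\<in>?T. g m (d n) * Pw m)"
  have "0 \<le> I" unfolding I_def using T_sub gv by (intro sum_nonneg) auto
  have "I \<le> (\<Sum>m\<in>?J. g m (d n) * Pw m)"
    unfolding I_def using T_sub gv by (intro sum_mono2) auto
  also have "\<dots> \<le> (\<Sum>m\<in>?J. min t (v m))"
  proof (intro sum_mono)
    fix m assume m: "m \<in> ?J"
    have "min t (v m) \<le> (\<Sum>m\<in>?J. min t (v m))"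
      using m gv t by (intro member_le_sum) (auto intro: order.trans)
    then have "min t (v m) = v m" using light by (auto simp: min_def)
    then show "g m (d n) * Pw m \<le> min t (v m)" using m gv by auto
  qed
  also have "\<dots> < t" by (rule light)
  finally have "I \<le> t" by simp
  moreover have "0 \<le> g n (d n) * Pw n" using n gv by auto
  ultimately show ?thesis
    using log_one_plus_le_interference[OF N0 _ \<open>0 \<le> I\<close>]
    unfolding rate_def if_not_P[OF no_receiver] I_def by simp
qed

lemma many_channels_near_interference_free:
  assumes N0: "N0 > 0" and t: "t > 0" and n: "n \<in> {1..N}" "d n \<noteq> n"
    and gv: "\<forall>m\<in>{1..N}-{d n}. 0 \<le> g m (d n) * Pw m \<and> g m (d n) * Pw m \<le> v m"
    and sparse: "(\<Sum>m\<in>{1..N}-{d n}. min t (v m)) \<le> t * (real K / 2 - 1)"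
  shows "\<exists>C \<subseteq> {1..K}. real K / 2 \<le> card C \<and>
     (\<forall>k\<in>C. log 2 (1 + g n (d n) * Pw n / N0) \<le> rate g Pw N0 d N n (a(n := k)) + log 2 (1 + t / N0))"
proof -
  let ?H = "\<lambda>k. \<Sum>m\<in>{m\<in>{1..N}-{d n}. a m = k}. min t (v m)"
  define S where "S = {1..K} - {a (d n)}"
  define C where "C = {k\<in>S. ?H k < t}"
  define Heavy where "Heavy = {k\<in>S. t \<le> ?H k}"
  have "t * card Heavy \<le> (\<Sum>m\<in>{1..N}-{d n}. min t (v m))"
    unfolding Heavy_def S_def using gv t by (intro card_heavy_classes_le) (auto intro: order.trans)
  then have "t * card Heavy \<le> t * (real K / 2 - 1)" using sparse by linarith
  then have "card Heavy \<le> real K / 2 - 1" using t mult_le_cancel_left_pos by blast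
  moreover have "card S = card C + card Heavy"
    unfolding C_def Heavy_def S_def by (subst card_Un_disjoint[symmetric]) (auto intro!: arg_cong[where f = card])
  moreover have "real K - 1 \<le> card S" unfolding S_def by (simp add: card_Diff_singleton_if)
  ultimately have "real K / 2 \<le> card C" by linarith
  moreover have "\<forall>k\<in>C. log 2 (1 + g n (d n) * Pw n / N0) \<le> rate g Pw N0 d N n (a(n := k)) + log 2 (1 + t / N0)"
    unfolding C_def S_def using gv
    by (auto intro!: rate_near_interference_free_on_light_channel[where d = d and n = n and v = v, OF N0 t n])
  ultimately show ?thesis by (intro exI[of _ C]) (auto simp: C_def S_def)
qed

lemma card_best_resp_ge:
  assumes "\<forall>b. u b \<le> R" "K \<ge> 1" "C \<subseteq> {1..K}" "\<forall>k\<in>C. R \<le> u (a(n := k)) + eps"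
  shows "card C \<le> card (best_resp u K eps n a)"
proof (intro card_mono)
  show "C \<subseteq> best_resp u K eps n a"
  proof
    fix k assume "k \<in> C"
    have "(MAX k'\<in>{1..K}. u (a(n := k'))) \<le> R" using assms(1,2) by (subst Max_le_iff) auto
    also have "\<dots> \<le> u (a(n := k)) + eps" using assms(4) \<open>k \<in> C\<close> by auto
    finally show "k \<in> best_resp u K eps n a" unfolding best_resp_def using assms(3) \<open>k \<in> C\<close> by auto
  qed
qed (simp add: best_resp_def)

lemma Max_channel_near:
  fixes K :: nat and u :: "('a \<Rightarrow> nat) \<Rightarrow> real"
  assumes "\<forall>b. u b \<le> R" "C \<subseteq> {1..K}" "C \<noteq> {}" "\<forall>k\<in>C. R \<le> u (a(n := k)) + eps"
  shows "\<bar>(MAX k\<in>{1..K}. u (a(n := k))) - R\<bar> \<le> eps"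
proof -
  obtain k0 where "k0 \<in> C" using assms(3) by auto
  then have "u (a(n := k0)) \<le> (MAX k\<in>{1..K}. u (a(n := k)))"
    using assms(2) by (intro Max_ge finite_imageI) auto
  moreover have "R \<le> u (a(n := k0)) + eps" using assms(4) \<open>k0 \<in> C\<close> by blast
  moreover have "(MAX k\<in>{1..K}. u (a(n := k))) \<le> R"
    using assms(1-3) by (subst Max_le_iff) auto
  ultimately show ?thesis by linarith
qed

lemma exp_le_1_plus_e_mult: fixes s :: real assumes "0 \<le> s" "s \<le> 1" shows "exp s \<le> 1 + exp 1 * s"
proof -
  have "(1 - s) * exp s \<le> exp (- s) * exp s"
    using exp_ge_add_one_self[of "-s"] by (intro mult_right_mono) auto
  then have "exp s - s * exp s \<le> 1" by (simp add: algebra_simps exp_minus_inverse)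
  moreover have "s * exp s \<le> s * exp 1" using assms by (intro mult_left_mono) auto
  ultimately show ?thesis by (simp add: algebra_simps)
qed

lemma (in prob_space) nn_integral_exp_bounded_le:
  assumes h: "h \<in> borel_measurable M" "\<And>z. 0 \<le> h z \<and> h z \<le> t" and t: "t > 0"
    and mu: "(\<integral>\<^sup>+z. ennreal (h z) \<partial>M) \<le> ennreal \<mu>" and mu0: "0 \<le> \<mu>"
  shows "(\<integral>\<^sup>+z. ennreal (exp (h z / t)) \<partial>M) \<le> ennreal (1 + exp 1 * \<mu> / t)"
proof -
  have "(\<integral>\<^sup>+z. ennreal (exp (h z / t)) \<partial>M) \<le> (\<integral>\<^sup>+z. 1 + ennreal (exp 1 / t) * ennreal (h z) \<partial>M)"
  proof (intro nn_integral_mono)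
    fix z
    have "exp (h z / t) \<le> 1 + exp 1 / t * h z"
      using exp_le_1_plus_e_mult[of "h z / t"] h(2)[of z] t by simp
    then have "ennreal (exp (h z / t)) \<le> ennreal (1 + exp 1 / t * h z)"
      by (rule ennreal_leI)
    also have "\<dots> = 1 + ennreal (exp 1 / t) * ennreal (h z)"
      using h(2)[of z] t by (subst ennreal_plus) (auto simp: ennreal_mult[symmetric])
    finally show "ennreal (exp (h z / t)) \<le> 1 + ennreal (exp 1 / t) * ennreal (h z)" .
  qed
  also have "\<dots> = 1 + ennreal (exp 1 / t) * (\<integral>\<^sup>+ z. ennreal (h z) \<partial>M)"
    using h(1) by (simp add: nn_integral_add nn_integral_cmult emeasure_space_1)
  also have "\<dots> \<le> 1 + ennreal (exp 1 / t) * ennreal \<mu>"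
    using mu by (intro add_left_mono mult_left_mono) auto
  also have "\<dots> = ennreal (1 + exp 1 * \<mu> / t)"
    using t mu0 by (subst ennreal_plus) (auto simp: ennreal_mult[symmetric])
  finally show ?thesis .
qed

lemma nn_integral_PiM_prod_exp_le:
  fixes U :: "'a measure" and h :: "'a \<Rightarrow> 'a \<Rightarrow> real"
  assumes U: "prob_space U" and I: "finite I" and t: "t > 0" and mu0: "0 \<le> \<mu>"
    and hy: "(\<lambda>z. h z y) \<in> borel_measurable U" and h_bounds: "\<And>z. 0 \<le> h z y \<and> h z y \<le> t"
    and mu: "(\<integral>\<^sup>+z. ennreal (h z y) \<partial>U) \<le> ennreal \<mu>"
  shows "(\<integral>\<^sup>+x. (\<Prod>m\<in>I. ennreal (exp (h (x m) y / t))) \<partial>PiM I (\<lambda>_. U))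
    \<le> ennreal ((1 + exp 1 * \<mu> / t) ^ card I)"
proof -
  interpret U: prob_space U by (rule U)
  interpret PS: product_sigma_finite "\<lambda>_. U"
    unfolding product_sigma_finite_def by (simp add: U.sigma_finite_measure_axioms)
  have "(\<integral>\<^sup>+x. (\<Prod>m\<in>I. ennreal (exp (h (x m) y / t))) \<partial>PiM I (\<lambda>_. U))
      = (\<Prod>m\<in>I. \<integral>\<^sup>+ z. ennreal (exp (h z y / t)) \<partial>U)"
    using I hy by (intro PS.product_nn_integral_prod) auto
  also have "\<dots> \<le> (\<Prod>m\<in>I. ennreal (1 + exp 1 * \<mu> / t))"
    using hy h_bounds mu t mu0 by (intro prod_mono_ennreal U.nn_integral_exp_bounded_le)
  also have "\<dots> = ennreal ((1 + exp 1 * \<mu> / t) ^ card I)"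
    using t mu0 by (simp only: prod_constant, subst ennreal_power) auto
  finally show ?thesis .
qed

lemma PiM_sum_tail_le:
  fixes U :: "'a measure" and h :: "'a \<Rightarrow> 'a \<Rightarrow> real"
  assumes U: "prob_space U" and I: "finite I" "j \<notin> I" and t: "t > 0" and mu0: "0 \<le> \<mu>"
    and hm: "\<And>m. m \<in> I \<Longrightarrow> (\<lambda>x. h (x m) (x j)) \<in> borel_measurable (PiM (insert j I) (\<lambda>_. U))"
    and hy: "\<And>y. (\<lambda>z. h z y) \<in> borel_measurable U"
    and h_bounds: "\<And>z y. 0 \<le> h z y \<and> h z y \<le> t"
    and mu: "\<And>y. y \<in> space U \<Longrightarrow> (\<integral>\<^sup>+z. ennreal (h z y) \<partial>U) \<le> ennreal \<mu>"
  shows "emeasure (PiM (insert j I) (\<lambda>_. U))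
            {x \<in> space (PiM (insert j I) (\<lambda>_. U)). (\<Sum>m\<in>I. h (x m) (x j)) > A}
          \<le> ennreal (exp (- A / t) * (1 + exp 1 * \<mu> / t) ^ card I)"
proof -
  interpret U: prob_space U by (rule U)
  interpret PS: product_sigma_finite "\<lambda>_. U"
    unfolding product_sigma_finite_def by (simp add: U.sigma_finite_measure_axioms)
  define Mx where "Mx = PiM (insert j I) (\<lambda>_. U)"
  define f where "f x = (\<Prod>m\<in>I. ennreal (exp (h (x m) (x j) / t)))" for x
  have f_exp: "f x = ennreal (exp ((\<Sum>m\<in>I. h (x m) (x j)) / t))" for x
    unfolding f_def using I by (simp add: prod_ennreal exp_sum sum_divide_distrib)
  have sum_meas: "(\<lambda>x. \<Sum>m\<in>I. h (x m) (x j)) \<in> borel_measurable Mx"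
    unfolding Mx_def by (intro borel_measurable_sum hm)
  then have f_meas: "f \<in> borel_measurable Mx" unfolding f_exp by measurable
  \<comment> \<open>exponential Markov inequality, then integrate out the receiver \<open>x j\<close> last\<close>
  have "emeasure Mx {x \<in> space Mx. (\<Sum>m\<in>I. h (x m) (x j)) > A}
      = (\<integral>\<^sup>+x. indicator {x \<in> space Mx. (\<Sum>m\<in>I. h (x m) (x j)) > A} x \<partial>Mx)"
    using sum_meas by simp
  also have "\<dots> \<le> (\<integral>\<^sup>+x. ennreal (exp (- A / t)) * f x \<partial>Mx)"
  proof (intro nn_integral_mono)
    fix x
    have "(\<Sum>m\<in>I. h (x m) (x j)) > A \<Longrightarrow> 1 \<le> exp (- A / t) * exp ((\<Sum>m\<in>I. h (x m) (x j)) / t)"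
      using t by (simp add: exp_add[symmetric] diff_divide_distrib[symmetric] divide_minus_left)
    then show "indicator {x \<in> space Mx. (\<Sum>m\<in>I. h (x m) (x j)) > A} x \<le> ennreal (exp (- A / t)) * f x"
      by (simp add: f_exp ennreal_mult[symmetric] indicator_def)
  qed
  also have "\<dots> = ennreal (exp (- A / t)) * (\<integral>\<^sup>+ y. (\<integral>\<^sup>+ x. f (x(j := y)) \<partial>PiM I (\<lambda>_. U)) \<partial>U)"
    using f_meas I unfolding Mx_def by (simp add: nn_integral_cmult PS.product_nn_integral_insert_rev)
  also have "\<dots> \<le> ennreal (exp (- A / t)) * (\<integral>\<^sup>+ y. ennreal ((1 + exp 1 * \<mu> / t) ^ card I) \<partial>U)"
  proof (intro mult_left_mono nn_integral_mono)
    fix y assume "y \<in> space U"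
    have "(\<integral>\<^sup>+ x. f (x(j := y)) \<partial>PiM I (\<lambda>_. U))
        = (\<integral>\<^sup>+ x. (\<Prod>m\<in>I. ennreal (exp (h (x m) y / t))) \<partial>PiM I (\<lambda>_. U))"
      unfolding f_def using I by (intro nn_integral_cong prod.cong) auto
    also have "\<dots> \<le> ennreal ((1 + exp 1 * \<mu> / t) ^ card I)"
      using \<open>y \<in> space U\<close> by (intro nn_integral_PiM_prod_exp_le U I t mu0 hy h_bounds mu)
    finally show "(\<integral>\<^sup>+ x. f (x(j := y)) \<partial>PiM I (\<lambda>_. U)) \<le> ennreal ((1 + exp 1 * \<mu> / t) ^ card I)" .
  qed simp
  also have "\<dots> = ennreal (exp (- A / t) * (1 + exp 1 * \<mu> / t) ^ card I)"
    using t mu0 by (simp add: U.emeasure_space_1 ennreal_mult[symmetric])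
  finally show ?thesis unfolding Mx_def .
qed

lemma emeasure_lborel_of_area:
  assumes "lam > 0" "measure lborel D = 1 / lam"
  shows "emeasure lborel D = ennreal (1 / lam)"
proof -
  have "emeasure lborel D \<noteq> \<top>"
    using assms by (auto simp: measure_def)
  then show ?thesis using assms(2) by (simp add: emeasure_eq_ennreal_measure)
qed

lemma prob_space_loc_space:
  assumes "D \<in> sets lborel" "lam > 0" "measure lborel D = 1 / lam"
  shows "prob_space (loc_space D N)"
  unfolding loc_space_def using emeasure_lborel_of_area[OF assms(2,3)] assms
  by (intro prob_space_PiM prob_space_uniform_measure) auto

lemma emeasure_lborel_ball_le:
  fixes y :: complex assumes "R > 0"
  shows "emeasure lborel (ball y R) \<le> ennreal (4 * R * R)"
proof -
  define w where "w = Complex R R"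
  have "ball y R \<subseteq> cbox (y - w) (y + w)"
  proof
    fix z assume "z \<in> ball y R"
    then have "cmod (y - z) < R" by (simp add: dist_norm)
    moreover have "\<bar>Re (y - z)\<bar> \<le> cmod (y - z)" "\<bar>Im (y - z)\<bar> \<le> cmod (y - z)"
      by (rule abs_Re_le_cmod, rule abs_Im_le_cmod)
    ultimately show "z \<in> cbox (y - w) (y + w)"
      by (auto simp: mem_box Basis_complex_def w_def)
  qed
  then have "emeasure lborel (ball y R) \<le> emeasure lborel (cbox (y - w) (y + w))"
    by (intro emeasure_mono) auto
  also have "\<dots> = ennreal (4 * R * R)"
    using assms by (simp add: emeasure_lborel_cbox_eq Basis_complex_def w_def)
  finally show ?thesis .
qed

lemma emeasure_uniform_ball_le:
  fixes y :: complex
  assumes "D \<in> sets lborel" "lam > 0" "measure lborel D = 1 / lam" "R > 0"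
  shows "emeasure (uniform_measure lborel D) (ball y R) \<le> ennreal (4 * R * R * lam)"
proof -
  have "emeasure (uniform_measure lborel D) (ball y R) = emeasure lborel (D \<inter> ball y R) / emeasure lborel D"
    using assms(1) by (intro emeasure_uniform_measure) auto
  also have "\<dots> \<le> emeasure lborel (ball y R) / emeasure lborel D"
    using assms(1) by (intro divide_right_mono_ennreal emeasure_mono) auto
  also have "\<dots> \<le> ennreal (4 * R * R) / ennreal (1 / lam)"
    unfolding emeasure_lborel_of_area[OF assms(2,3)]
    by (intro divide_right_mono_ennreal emeasure_lborel_ball_le assms(4))
  also have "\<dots> = ennreal (4 * R * R * lam)"
    using assms by (subst divide_ennreal) auto
  finally show ?thesis .
qed

lemma nn_integral_truncated_pathloss_le:
  fixes M :: "complex measure"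
  assumes M: "prob_space M"
    and ball: "ball y R \<in> sets M" "emeasure M (ball y R) \<le> ennreal p"
    and nonneg: "t \<ge> 0" "c \<ge> 0" "p \<ge> 0" and R: "R > 0" and alpha: "alpha > 0"
  shows "(\<integral>\<^sup>+z. ennreal (min t (c * cmod (z - y) powr (- alpha))) \<partial>M) \<le> ennreal (t * p + c * R powr (- alpha))"
proof -
  \<comment> \<open>near points contribute at most \<open>t\<close>, far ones at most the path loss at distance \<open>R\<close>\<close>
  have "ennreal (min t (c * cmod (z - y) powr (- alpha)))
      \<le> ennreal t * indicator (ball y R) z + ennreal (c * R powr (- alpha))" for z
  proof (cases "z \<in> ball y R")
    case True
    then show ?thesis using nonneg
      by (simp add: min_le_iff_disj ennreal_plus[symmetric] del: ennreal_plus)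
  next
    case False
    then have "cmod (z - y) powr (- alpha) \<le> R powr (- alpha)"
      using R alpha by (intro powr_mono2') (auto simp: dist_norm norm_minus_commute)
    then have "min t (c * cmod (z - y) powr (- alpha)) \<le> c * R powr (- alpha)"
      using nonneg by (simp add: min_le_iff_disj mult_left_mono)
    then show ?thesis using False by (simp add: ennreal_leI)
  qed
  then have "(\<integral>\<^sup>+z. ennreal (min t (c * cmod (z - y) powr (- alpha))) \<partial>M)
      \<le> (\<integral>\<^sup>+z. ennreal t * indicator (ball y R) z + ennreal (c * R powr (- alpha)) \<partial>M)"
    by (intro nn_integral_mono)
  also have "\<dots> = ennreal t * emeasure M (ball y R) + ennreal (c * R powr (- alpha))"
    using ball(1) by (simp add: nn_integral_add nn_integral_cmult_indicator prob_space.emeasure_space_1[OF M])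
  also have "\<dots> \<le> ennreal t * ennreal p + ennreal (c * R powr (- alpha))"
    using ball(2) by (intro add_right_mono mult_left_mono) auto
  also have "\<dots> = ennreal (t * p + c * R powr (- alpha))"
    using nonneg R by (simp add: ennreal_mult[symmetric] ennreal_plus[symmetric] del: ennreal_plus)
  finally show ?thesis .
qed

definition low_interference ::
    "complex set \<Rightarrow> real \<Rightarrow> real \<Rightarrow> real \<Rightarrow> nat \<Rightarrow> nat \<Rightarrow> (nat \<Rightarrow> complex) set" where
  "low_interference D alpha c t K N = {x\<in>space (loc_space D N). \<forall>j\<in>{1..N}.
      (\<Sum>m\<in>{1..N}-{j}. min t (c * cmod (x m - x j) powr (- alpha))) \<le> t * (real K / 2 - 1)}"

lemma sets_low_interference: "low_interference D alpha c t K N \<in> sets (loc_space D N)"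
proof -
  have "(\<lambda>x. \<Sum>m\<in>{1..N}-{j}. min t (c * cmod (x m - x j) powr (- alpha))) \<in> borel_measurable (loc_space D N)"
    if "j \<in> {1..N}" for j
    using that by (intro borel_measurable_loc_space) measurable
  then show ?thesis unfolding low_interference_def
    by (intro predE pred_intros_finite pred_le_const[where N = borel]) auto
qed

lemma prob_heavy_receiver_le:
  fixes D :: "complex set"
  assumes D: "D \<in> sets lborel" "lam > 0" "measure lborel D = 1 / lam"
    and t: "t > 0" and c: "c \<ge> 0" and R: "R > 0" and alpha: "alpha > 0" and j: "j \<in> {1..N}"
  shows "measure (loc_space D N) {x \<in> space (loc_space D N).
            (\<Sum>m\<in>{1..N}-{j}. min t (c * cmod (x m - x j) powr (- alpha))) > t * (real K / 2 - 1)}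
     \<le> exp (- (real K / 2 - 1)) * (1 + exp 1 * (t * (4 * R * R * lam) + c * R powr (- alpha)) / t) ^ (N - 1)"
proof -
  define U where "U = uniform_measure lborel D"
  define \<mu> where "\<mu> = t * (4 * R * R * lam) + c * R powr (- alpha)"
  define h where "h z y = min t (c * cmod (z - y) powr (- alpha))" for z y :: complex
  define I where "I = {1..N} - {j}"
  have U: "prob_space U"
    unfolding U_def using emeasure_lborel_of_area[OF D(2,3)] D by (intro prob_space_uniform_measure) auto
  have M: "loc_space D N = PiM (insert j I) (\<lambda>_. U)"
    unfolding loc_space_def U_def I_def using j by (simp add: insert_absorb)
  have "emeasure (loc_space D N) {x \<in> space (loc_space D N). (\<Sum>m\<in>I. h (x m) (x j)) > t * (real K / 2 - 1)}
      \<le> ennreal (exp (- (t * (real K / 2 - 1)) / t) * (1 + exp 1 * \<mu> / t) ^ card I)"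
    unfolding M
  proof (rule PiM_sum_tail_le[OF U _ _ t])
    show "finite I" "j \<notin> I" "0 \<le> \<mu>" unfolding I_def \<mu>_def using t R c D by auto
    show "(\<lambda>x. h (x m) (x j)) \<in> borel_measurable (PiM (insert j I) (\<lambda>_. U))" if "m \<in> I" for m
      unfolding M[symmetric] h_def using that j I_def by (intro borel_measurable_loc_space) measurable
    show "(\<lambda>z. h z y) \<in> borel_measurable U" for y
      unfolding U_def h_def by (subst measurable_cong_sets[of _ borel]) auto
    show "0 \<le> h z y \<and> h z y \<le> t" for z y unfolding h_def using t c by simp
    show "(\<integral>\<^sup>+z. ennreal (h z y) \<partial>U) \<le> ennreal \<mu>" for y
      unfolding h_def \<mu>_def using t c R alpha D
      by (intro nn_integral_truncated_pathloss_le[OF U _ emeasure_uniform_ball_le[OF D R, folded U_def]])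
        (auto simp: U_def)
  qed
  moreover have "exp (- (t * (real K / 2 - 1)) / t) = exp (- (real K / 2 - 1))" "card I = N - 1"
    using t j by (auto simp: I_def)
  moreover have "0 \<le> 1 + exp 1 * \<mu> / t" unfolding \<mu>_def using t c R D by simp
  ultimately show ?thesis
    unfolding measure_def h_def I_def \<mu>_def by (intro enn2real_leI) auto
qed

lemma prob_not_low_interference_le:
  fixes D :: "complex set"
  assumes D: "D \<in> sets lborel" "lam > 0" "measure lborel D = 1 / lam"
    and t: "t > 0" and c: "c \<ge> 0" and R: "R > 0" and alpha: "alpha > 0"
  shows "measure (loc_space D N) (space (loc_space D N) - low_interference D alpha c t K N)
     \<le> real N * (exp (- (real K / 2 - 1)) * (1 + exp 1 * (t * (4 * R * R * lam) + c * R powr (- alpha)) / t) ^ (N - 1))"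
proof -
  interpret M: prob_space "loc_space D N" by (rule prob_space_loc_space[OF D])
  define Heavy where "Heavy j = {x \<in> space (loc_space D N).
      (\<Sum>m\<in>{1..N}-{j}. min t (c * cmod (x m - x j) powr (- alpha))) > t * (real K / 2 - 1)}" for j
  have "Heavy j \<in> M.events" if "j \<in> {1..N}" for j
  proof -
    have "(\<lambda>x. \<Sum>m\<in>{1..N}-{j}. min t (c * cmod (x m - x j) powr (- alpha))) \<in> borel_measurable (loc_space D N)"
      using that by (intro borel_measurable_loc_space) measurable
    then show ?thesis unfolding Heavy_def by measurable
  qed
  moreover have "space (loc_space D N) - low_interference D alpha c t K N \<subseteq> (\<Union>j\<in>{1..N}. Heavy j)"
    unfolding low_interference_def Heavy_def by (auto simp: not_le)
  ultimately have "M.prob (space (loc_space D N) - low_interference D alpha c t K N) \<le> (\<Sum>j\<in>{1..N}. M.prob (Heavy j))"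
    by (intro order.trans[OF M.finite_measure_mono M.finite_measure_subadditive_finite]) auto
  also have "\<dots> \<le> (\<Sum>j\<in>{1..N}. exp (- (real K / 2 - 1))
      * (1 + exp 1 * (t * (4 * R * R * lam) + c * R powr (- alpha)) / t) ^ (N - 1))"
    unfolding Heavy_def by (intro sum_mono prob_heavy_receiver_le[OF D t c R alpha])
  finally show ?thesis by simp
qed

lemma pathloss_radius_balance:
  fixes c :: real
  assumes "c > 0" "alpha > 0" "R = c powr (1 / (alpha + 2))"
  shows "t * (4 * R * R * lam) + c * R powr (- alpha) = (4 * t * lam + 1) * c powr (2 / (alpha + 2))"
proof -
  have "R * R = c powr (2 / (alpha + 2))"
    using assms by (simp add: powr_add[symmetric])
  moreover have "c * R powr (- alpha) = c powr (2 / (alpha + 2))"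
  proof -
    have "c * R powr (- alpha) = c powr 1 * c powr (- alpha / (alpha + 2))"
      using assms by (simp add: powr_powr)
    also have "\<dots> = c powr (1 + - alpha / (alpha + 2))" by (rule powr_add[symmetric])
    also have "1 + - alpha / (alpha + 2) = 2 / (alpha + 2)" using assms by (simp add: field_simps)
    finally show ?thesis .
  qed
  ultimately show ?thesis by (simp add: algebra_simps)
qed

lemma union_bound_le_exp:
  fixes C w :: real
  assumes "real K * l = real N" "l > 0" "C \<ge> 0" "w \<ge> 0" "4 * C * (l * w) \<le> 1"
  shows "real N * (exp (- (real K / 2 - 1)) * (1 + C * w) ^ (N - 1)) \<le> exp 1 * (real N * exp (- (C * (real N * w))))"
proof -
  have "(1 + C * w) ^ (N - 1) \<le> exp (C * w) ^ (N - 1)"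
    using assms by (intro power_mono) (auto simp: exp_ge_add_one_self)
  also have "\<dots> \<le> exp (real N * (C * w))"
    using assms by (simp add: exp_of_nat_mult[symmetric] mult_right_mono)
  finally have "real N * (exp (- (real K / 2 - 1)) * (1 + C * w) ^ (N - 1))
      \<le> real N * (exp (- (real K / 2 - 1)) * exp (real N * (C * w)))"
    by (intro mult_left_mono) auto
  also have "\<dots> = real N * exp (1 - real K / 2 + real N * C * w)"
    by (simp add: exp_add[symmetric] algebra_simps)
  also have "\<dots> \<le> real N * exp (1 - C * (real N * w))"
  proof -
    have "real N * (4 * C * (l * w)) \<le> real N" using assms by (simp add: mult_left_le)
    then have "l * (4 * C * real N * w) \<le> l * real K"
      using assms(1) by (simp add: algebra_simps)
    then have "2 * C * real N * w \<le> real K / 2"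
      using assms(2) mult_le_cancel_left_pos by fastforce
    then show ?thesis by (intro mult_left_mono) (auto simp: algebra_simps)
  qed
  finally show ?thesis by (simp add: exp_diff exp_minus field_simps)
qed

lemma measure_tendsto_1_of_superset:
  assumes "\<And>N. prob_space (M N)" "\<And>N. A N \<in> sets (M N)"
    and "eventually (\<lambda>N. A N \<subseteq> B N \<and> B N \<in> sets (M N)) sequentially"
    and "(\<lambda>N. measure (M N) (space (M N) - A N)) \<longlonglongrightarrow> 0"
  shows "(\<lambda>N. measure (M N) (B N)) \<longlonglongrightarrow> 1"
proof (rule tendsto_sandwich)
  show "eventually (\<lambda>N. 1 - measure (M N) (space (M N) - A N) \<le> measure (M N) (B N)) sequentially"
    using assms(3)
  proof eventually_elim
    case (elim N)
    interpret prob_space "M N" by (rule assms(1))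
    show ?case using elim prob_compl[OF assms(2)] finite_measure_mono by simp
  qed
  show "eventually (\<lambda>N. measure (M N) (B N) \<le> 1) sequentially"
    using prob_space.prob_le_1[OF assms(1)] by simp
  show "(\<lambda>N. 1 - measure (M N) (space (M N) - A N)) \<longlonglongrightarrow> 1"
    using tendsto_diff[OF tendsto_const assms(4)] by simp
qed simp

lemma measure_tendsto_0_of_subset:
  assumes "\<And>N. prob_space (M N)" "\<And>N. A N \<in> sets (M N)"
    and "eventually (\<lambda>N. B N \<subseteq> space (M N) - A N) sequentially"
    and "(\<lambda>N. measure (M N) (space (M N) - A N)) \<longlonglongrightarrow> 0"
  shows "(\<lambda>N. measure (M N) (B N)) \<longlonglongrightarrow> 0"
proof (rule tendsto_sandwich[OF _ _ tendsto_const assms(4)])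
  show "eventually (\<lambda>N. measure (M N) (B N) \<le> measure (M N) (space (M N) - A N)) sequentially"
    using assms(3)
  proof eventually_elim
    case (elim N)
    interpret prob_space "M N" by (rule assms(1))
    \<comment> \<open>if \<open>B N\<close> is not measurable its measure is \<open>0\<close> by convention\<close>
    show ?case
      using elim finite_measure_mono assms(2)[of N]
      by (cases "B N \<in> sets (M N)") (auto simp: measure_notin_sets)
  qed
qed simp

locale random_channel_game =
  fixes lam alpha G P0 N0 thT thR :: real and D :: "complex set"
    and d :: "nat \<Rightarrow> nat \<Rightarrow> nat" and l :: "nat \<Rightarrow> real" and K :: "nat \<Rightarrow> nat"
    and oT oR :: "nat \<Rightarrow> nat \<Rightarrow> real" and P :: "nat \<Rightarrow> (nat \<Rightarrow> complex) \<Rightarrow> nat \<Rightarrow> real"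
  assumes lam_pos: "lam > 0" and alpha_pos: "alpha > 0" and G_pos: "G > 0"
    and P0_pos: "P0 > 0" and N0_pos: "N0 > 0"
    and D_sets: "D \<in> sets lborel" and D_area: "measure lborel D = 1 / lam"
    and d_range: "\<And>N n. N \<ge> 2 \<Longrightarrow> n \<in> {1..N} \<Longrightarrow> d N n \<in> {1..N} \<and> d N n \<noteq> n"
    and l_ge: "\<And>N. N \<ge> 2 \<Longrightarrow> l N \<ge> 1"
    and K_def: "\<And>N. N \<ge> 2 \<Longrightarrow> real (K N) * l N = real N"
    and l_lim: "(\<lambda>N. l N * (ln (real N) / real N) powr (alpha / (alpha + 2))) \<longlonglongrightarrow> 0"
    and P_bound: "\<And>N x n. N \<ge> 2 \<Longrightarrow> x \<in> space (loc_space D N) \<Longrightarrow> n \<in> {1..N} \<Longrightarrow>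
                    0 < P N x n \<and> P N x n \<le> P0 * (ln (real N) / real N) powr (alpha / 2)"
    and P_meas: "\<And>N n. N \<ge> 2 \<Longrightarrow> n \<in> {1..N} \<Longrightarrow>
                    (\<lambda>x. P N x n) \<in> borel_measurable (loc_space D N)"
begin

abbreviation utility :: "nat \<Rightarrow> (nat \<Rightarrow> complex) \<Rightarrow> nat \<Rightarrow> (nat \<Rightarrow> nat) \<Rightarrow> real" where
  "utility N x n \<equiv> rate (gain G alpha thT thR x (oT N) (oR N)) (P N x) N0 (d N) N n"

abbreviation free_rate :: "nat \<Rightarrow> (nat \<Rightarrow> complex) \<Rightarrow> nat \<Rightarrow> real" where
  "free_rate N x n \<equiv> log 2 (1 + gain G alpha thT thR x (oT N) (oR N) n (d N n) * P N x n / N0)"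

abbreviation c_max :: "nat \<Rightarrow> real" where
  "c_max N \<equiv> G * (P0 * (ln (real N) / real N) powr (alpha / 2))"

lemma prob_space_locations: "prob_space (loc_space D N)"
  by (rule prob_space_loc_space[OF D_sets lam_pos D_area])

lemma K_pos: "N \<ge> 2 \<Longrightarrow> K N \<ge> 1"
  using K_def[of N] by (cases "K N") auto

lemma low_interference_tendsto:
  assumes t: "t > 0"
  shows "(\<lambda>N. measure (loc_space D N)
      (space (loc_space D N) - low_interference D alpha (c_max N) t (K N) N)) \<longlonglongrightarrow> 0"
proof -
  define w where "w N = (ln (real N) / real N) powr (alpha / (alpha + 2))" for N :: nat
  define C where "C = exp 1 * (4 * t * lam + 1) * (G * P0) powr (2 / (alpha + 2)) / t"
  have C: "C > 0" unfolding C_def using t lam_pos G_pos P0_pos by (simp add: add_pos_pos)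
  have lim: "(\<lambda>N. exp 1 * (real N * exp (- (C * (real N * w N))))) \<longlonglongrightarrow> exp 1 * 0"
    unfolding w_def using alpha_pos C by (intro tendsto_mult tendsto_const) real_asymp
  have "eventually (\<lambda>N. l N * w N < 1 / (4 * C)) sequentially"
    using order_tendstoD(2)[OF l_lim, of "1 / (4 * C)"] C unfolding w_def by simp
  then have le: "eventually (\<lambda>N. measure (loc_space D N) (space (loc_space D N) - low_interference D alpha (c_max N) t (K N) N)
      \<le> exp 1 * (real N * exp (- (C * (real N * w N))))) sequentially"
    using eventually_ge_at_top[of 2]
  proof eventually_elim
    case (elim N)
    have c_pos: "c_max N > 0" using elim G_pos P0_pos by simp
    then have R_pos: "c_max N powr (1 / (alpha + 2)) > 0" by (metis powr_gt_zero order_less_irrefl)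
    \<comment> \<open>the radius \<open>c_max N powr (1 / (alpha + 2))\<close> balances near and far interferers\<close>
    have "c_max N powr (2 / (alpha + 2)) = (G * P0) powr (2 / (alpha + 2)) * w N"
      unfolding w_def using elim G_pos P0_pos by (simp add: powr_mult powr_powr mult.assoc)
    then have "exp 1 * (t * (4 * c_max N powr (1 / (alpha + 2)) * c_max N powr (1 / (alpha + 2)) * lam)
        + c_max N * (c_max N powr (1 / (alpha + 2))) powr (- alpha)) / t = C * w N"
      unfolding pathloss_radius_balance[OF c_pos alpha_pos refl] C_def using t by simp
    then have "measure (loc_space D N) (space (loc_space D N) - low_interference D alpha (c_max N) t (K N) N)
        \<le> real N * (exp (- (real (K N) / 2 - 1)) * (1 + C * w N) ^ (N - 1))"
      using prob_not_low_interference_le[OF D_sets lam_pos D_area t less_imp_le[OF c_pos] R_pos alpha_pos]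
      by simp
    also have "\<dots> \<le> exp 1 * (real N * exp (- (C * (real N * w N))))"
      using elim K_def[of N] l_ge[of N] C unfolding w_def
      by (intro union_bound_le_exp[where l = "l N"]) (auto simp: field_simps)
    finally show ?case .
  qed
  show ?thesis
    using tendsto_sandwich[OF _ le tendsto_const] lim by simp
qed

lemma received_power_bounds:
  assumes N: "N \<ge> 2" and x: "x \<in> space (loc_space D N)" and m: "m \<in> {1..N}"
  shows "0 \<le> gain G alpha thT thR x (oT N) (oR N) m j * P N x m
    \<and> gain G alpha thT thR x (oT N) (oR N) m j * P N x m \<le> c_max N * cmod (x m - x j) powr (- alpha)"
proof -
  have "0 \<le> gain G alpha thT thR x (oT N) (oR N) m j"
    "gain G alpha thT thR x (oT N) (oR N) m j \<le> G * cmod (x m - x j) powr (- alpha)"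
    using G_pos unfolding gain_def by auto
  moreover have "0 < P N x m" "P N x m \<le> P0 * (ln (real N) / real N) powr (alpha / 2)"
    using P_bound[OF N x m] by auto
  ultimately have "gain G alpha thT thR x (oT N) (oR N) m j * P N x m
      \<le> G * cmod (x m - x j) powr (- alpha) * (P0 * (ln (real N) / real N) powr (alpha / 2))"
    by (intro mult_mono) auto
  with \<open>0 < P N x m\<close> \<open>0 \<le> gain G alpha thT thR x (oT N) (oR N) m j\<close> show ?thesis
    by (simp add: algebra_simps)
qed

lemma utility_le_free_rate:
  assumes "N \<ge> 2" "x \<in> space (loc_space D N)" "n \<in> {1..N}"
  shows "utility N x n b \<le> free_rate N x n"
  using assms received_power_bounds by (intro rate_le_interference_free N0_pos) auto

lemma many_channels_near_free_rate:
  assumes N: "N \<ge> 2" and t: "t > 0" and x: "x \<in> low_interference D alpha (c_max N) t (K N) N"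
    and n: "n \<in> {1..N}"
  shows "\<exists>C \<subseteq> {1..K N}. real (K N) / 2 \<le> card C \<and>
    (\<forall>k\<in>C. free_rate N x n \<le> utility N x n (a(n := k)) + log 2 (1 + t / N0))"
proof (rule many_channels_near_interference_free[OF N0_pos t n])
  have "x \<in> space (loc_space D N)" using x by (simp add: low_interference_def)
  then show "\<forall>m\<in>{1..N} - {d N n}. 0 \<le> gain G alpha thT thR x (oT N) (oR N) m (d N n) * P N x m \<and>
      gain G alpha thT thR x (oT N) (oR N) m (d N n) * P N x m \<le> c_max N * cmod (x m - x (d N n)) powr (- alpha)"
    using received_power_bounds[OF N] by blast
  show "(\<Sum>m\<in>{1..N} - {d N n}. min t (c_max N * cmod (x m - x (d N n)) powr (- alpha))) \<le> t * (real (K N) / 2 - 1)"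
    using x d_range[OF N n] by (auto simp: low_interference_def)
qed (use d_range[OF N n] in auto)

lemma card_best_resp_on_low_interference:
  assumes N: "N \<ge> 2" and t: "t > 0" and x: "x \<in> low_interference D alpha (c_max N) t (K N) N"
    and n: "n \<in> {1..N}"
  shows "real (K N) / 2 \<le> card (best_resp (utility N x n) (K N) (log 2 (1 + t / N0)) n a)"
proof -
  obtain C where C: "C \<subseteq> {1..K N}" "real (K N) / 2 \<le> card C"
    and near: "\<forall>k\<in>C. free_rate N x n \<le> utility N x n (a(n := k)) + log 2 (1 + t / N0)"
    using many_channels_near_free_rate[OF N t x n] by blast
  have "card C \<le> card (best_resp (utility N x n) (K N) (log 2 (1 + t / N0)) n a)"
    using x n utility_le_free_rate[OF N] K_pos[OF N] C(1) near
    by (intro card_best_resp_ge) (auto simp: low_interference_def)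
  with C(2) show ?thesis by linarith
qed

lemma Max_utility_near_on_low_interference:
  assumes N: "N \<ge> 2" and t: "t > 0" and x: "x \<in> low_interference D alpha (c_max N) t (K N) N"
    and n: "n \<in> {1..N}"
  shows "\<bar>(MAX k\<in>{1..K N}. utility N x n (a(n := k))) - free_rate N x n\<bar> \<le> log 2 (1 + t / N0)"
proof -
  obtain C where C: "C \<subseteq> {1..K N}" "real (K N) / 2 \<le> card C"
    and near: "\<forall>k\<in>C. free_rate N x n \<le> utility N x n (a(n := k)) + log 2 (1 + t / N0)"
    using many_channels_near_free_rate[OF N t x n] by blast
  have "C \<noteq> {}" using C(2) K_pos[OF N] by auto
  moreover have "\<forall>b. utility N x n b \<le> free_rate N x n"
    using x n utility_le_free_rate[OF N] by (auto simp: low_interference_def)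
  ultimately show ?thesis using Max_channel_near[OF _ C(1) _ near] by blast
qed

lemma best_resp_card_tendsto:
  assumes q: "q > 1" and eps: "eps > 0"
  shows "(\<lambda>N. measure (loc_space D N) {x \<in> space (loc_space D N). \<forall>a\<in>profiles N (K N). \<forall>n\<in>{1..N}.
      real (card (best_resp (utility N x n) (K N) eps n a)) \<ge> 1 / (2 * l N) * (1 - 1 / q) * real N}) \<longlonglongrightarrow> 1"
proof -
  define t where "t = N0 * (2 powr eps - 1)"
  have t: "t > 0" and log_t: "log 2 (1 + t / N0) = eps"
    unfolding t_def using N0_pos eps by (simp_all add: gr_one_powr)
  define Good where "Good N = {x \<in> space (loc_space D N). \<forall>a\<in>profiles N (K N). \<forall>n\<in>{1..N}.
      real (card (best_resp (utility N x n) (K N) eps n a)) \<ge> 1 / (2 * l N) * (1 - 1 / q) * real N}" for N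
  have "eventually (\<lambda>N. low_interference D alpha (c_max N) t (K N) N \<subseteq> Good N \<and> Good N \<in> sets (loc_space D N))
      sequentially"
    using eventually_ge_at_top[of 2]
  proof eventually_elim
    case (elim N)
    have "1 / (2 * l N) * (1 - 1 / q) * real N = real (K N) / 2 * (1 - 1 / q)"
      using l_ge[OF elim] by (simp add: K_def[OF elim, symmetric] field_simps)
    also have "\<dots> \<le> real (K N) / 2" using q by (simp add: mult_left_le)
    finally have bound: "1 / (2 * l N) * (1 - 1 / q) * real N \<le> real (K N) / 2" .
    have "low_interference D alpha (c_max N) t (K N) N \<subseteq> Good N"
    proof
      fix x assume x: "x \<in> low_interference D alpha (c_max N) t (K N) N"
      then have "x \<in> space (loc_space D N)" by (simp add: low_interference_def)
      moreover have "1 / (2 * l N) * (1 - 1 / q) * real N \<le> card (best_resp (utility N x n) (K N) eps n a)"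
        if "n \<in> {1..N}" for n a
        using card_best_resp_on_low_interference[OF elim t x that, of a] bound unfolding log_t by linarith
      ultimately show "x \<in> Good N" unfolding Good_def by blast
    qed
    moreover have "Good N \<in> sets (loc_space D N)"
      unfolding Good_def
    proof (rule sets_card_best_resp_ge)
      show "finite (profiles N (K N))" by (simp add: profiles_def finite_PiE)
      show "(\<lambda>x. utility N x n (a(n := k))) \<in> borel_measurable (loc_space D N)" if "n \<in> {1..N}" for a n k
        using that d_range[OF elim] P_meas[OF elim]
        by (intro borel_measurable_rate borel_measurable_loc_space[OF borel_measurable_gain]) auto
    qed
    ultimately show ?case ..
  qed
  from measure_tendsto_1_of_superset[OF prob_space_locations sets_low_interference this low_interference_tendsto[OF t]]
  show ?thesis unfolding Good_def .
qed

lemma Max_utility_deviation_tendsto: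
  assumes delta: "delta > 0"
  shows "(\<lambda>N. measure (loc_space D N) {x \<in> space (loc_space D N).
      (MAX n\<in>{1..N}. MAX a\<in>profiles N (K N). \<bar>(MAX k\<in>{1..K N}. utility N x n (a(n := k))) - free_rate N x n\<bar>)
        > delta}) \<longlonglongrightarrow> 0"
proof -
  define t where "t = N0 * (2 powr (delta / 2) - 1)"
  have t: "t > 0" and log_t: "log 2 (1 + t / N0) = delta / 2"
    unfolding t_def using N0_pos delta by (simp_all add: gr_one_powr)
  define Dev where "Dev N x = (MAX n\<in>{1..N}. MAX a\<in>profiles N (K N).
      \<bar>(MAX k\<in>{1..K N}. utility N x n (a(n := k))) - free_rate N x n\<bar>)" for N x
  have "eventually (\<lambda>N. {x \<in> space (loc_space D N). Dev N x > delta}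
      \<subseteq> space (loc_space D N) - low_interference D alpha (c_max N) t (K N) N) sequentially"
    using eventually_ge_at_top[of 2]
  proof eventually_elim
    case (elim N)
    have "profiles N (K N) \<noteq> {}" "finite (profiles N (K N))"
      using K_pos[OF elim] unfolding profiles_def by (auto simp: PiE_eq_empty_iff finite_PiE)
    then have "(MAX a\<in>profiles N (K N).
        \<bar>(MAX k\<in>{1..K N}. utility N x n (a(n := k))) - free_rate N x n\<bar>) \<le> delta / 2"
      if "x \<in> low_interference D alpha (c_max N) t (K N) N" "n \<in> {1..N}" for x n
      using that Max_utility_near_on_low_interference[OF elim t] unfolding log_t
      by (subst Max_le_iff) auto
    then have "Dev N x \<le> delta / 2" if "x \<in> low_interference D alpha (c_max N) t (K N) N" for x
      unfolding Dev_def using that elim by (subst Max_le_iff) auto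
    then show ?case using delta by force
  qed
  from measure_tendsto_0_of_subset[OF prob_space_locations sets_low_interference this low_interference_tendsto[OF t]]
  show ?thesis unfolding Dev_def .
qed

end

theorem lemma3:
  fixes lam alpha G thT thR P0 N0 :: real and S :: nat and D :: "complex set"
    and d :: "nat \<Rightarrow> nat \<Rightarrow> nat" and l :: "nat \<Rightarrow> real" and K :: "nat \<Rightarrow> nat"
    and oT oR :: "nat \<Rightarrow> nat \<Rightarrow> real"
    and P :: "nat \<Rightarrow> (nat \<Rightarrow> complex) \<Rightarrow> nat \<Rightarrow> real"
  assumes lam_pos: "lam > 0" and alpha_pos: "alpha > 0" and G_pos: "G > 0"
    and thT: "0 < thT" "thT \<le> 2 * pi" and thR: "0 < thR" "thR \<le> 2 * pi"
    and P0_pos: "P0 > 0" and N0_pos: "N0 > 0" and S_pos: "S > 0"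
    and D_closed: "closed D" and D_area: "D \<in> sets lborel" "measure lborel D = 1 / lam"
    and d_range: "\<And>N n. N \<ge> 2 \<Longrightarrow> n \<in> {1..N} \<Longrightarrow> d N n \<in> {1..N} \<and> d N n \<noteq> n"
    and d_bound: "\<And>N j. N \<ge> 2 \<Longrightarrow> j \<in> {1..N} \<Longrightarrow> card {n\<in>{1..N}. d N n = j} \<le> S"
    and l_ge: "\<And>N. N \<ge> 2 \<Longrightarrow> l N \<ge> 1"
    and K_def: "\<And>N. N \<ge> 2 \<Longrightarrow> real (K N) * l N = real N"
    and l_lim: "(\<lambda>N. l N * (ln (real N) / real N) powr (alpha / (alpha + 2))) \<longlonglongrightarrow> 0"
    and P_bound: "\<And>N x n. N \<ge> 2 \<Longrightarrow> x \<in> space (loc_space D N) \<Longrightarrow> n \<in> {1..N} \<Longrightarrow>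
                    0 < P N x n \<and> P N x n \<le> P0 * (ln (real N) / real N) powr (alpha / 2)"
    and P_meas: "\<And>N n. N \<ge> 2 \<Longrightarrow> n \<in> {1..N} \<Longrightarrow>
                    (\<lambda>x. P N x n) \<in> borel_measurable (loc_space D N)"
  shows
    "(\<forall>q>1. \<forall>eps>0.
       (\<lambda>N. measure (loc_space D N)
          {x \<in> space (loc_space D N). \<forall>a\<in>profiles N (K N). \<forall>n\<in>{1..N}.
             real (card (best_resp
                (rate (gain G alpha thT thR x (oT N) (oR N)) (P N x) N0 (d N) N n)
                (K N) eps n a))
             \<ge> 1 / (2 * l N) * (1 - 1 / q) * real N}) \<longlonglongrightarrow> 1)
     \<and> (\<forall>delta>0.
       (\<lambda>N. measure (loc_space D N)
          {x \<in> space (loc_space D N).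
             (MAX n\<in>{1..N}. MAX a\<in>profiles N (K N).
                \<bar>(MAX k\<in>{1..K N}.
                    rate (gain G alpha thT thR x (oT N) (oR N)) (P N x) N0 (d N) N n (a(n := k)))
                 - log 2 (1 + gain G alpha thT thR x (oT N) (oR N) n (d N n) * P N x n / N0)\<bar>)
             > delta}) \<longlonglongrightarrow> 0)"
proof -
  interpret random_channel_game lam alpha G P0 N0 thT thR D d l K oT oR P
    by unfold_locales (fact assms)+
  show ?thesis using best_resp_card_tendsto Max_utility_deviation_tendsto by blast
qed

end
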